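(* Let $\beta>0$, $\sigma>0$, and let $f$ be a sample path of the centered Gaussian process on $[0,1]$ with covariance $\sigma^2\exp(-\beta|x-y|)$ (continuous version). Then for every integer $n\ge 0$, $$\mathbb E\Big[\max_{0\le i\le 2^n} f(i/2^n)\Big]<8.68\sqrt{\beta}\,\sigma,$$ and consequently $\mathbb E[\max_{x\in[0,1]}f(x)]\le 8.68\sqrt\beta\,\sigma$. *)

theory Defs
  imports "HOL-Probability.Probability"
begin

definition centered_gaussian_process ::
  "'a measure \<Rightarrow> (real \<Rightarrow> 'a \<Rightarrow> real) \<Rightarrow> real set \<Rightarrow> (real \<Rightarrow> real \<Rightarrow> real) \<Rightarrow> bool" where
  "centered_gaussian_process M X T K \<longleftrightarrow>
     prob_space M \<and>
     (\<forall>t\<in>T. X t \<in> borel_measurable M) \<and>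
     (\<forall>(F::real set) (c::real \<Rightarrow> real). finite F \<and> F \<subseteq> T \<longrightarrow>
        (let v = (\<Sum>s\<in>F. \<Sum>t\<in>F. c s * c t * K s t) in
          if v = 0 then (AE \<omega> in M. (\<Sum>t\<in>F. c t * X t \<omega>) = 0)
          else distributed M lborel (\<lambda>\<omega>. \<Sum>t\<in>F. c t * X t \<omega>) (normal_density 0 (sqrt v))))"

end

theory Submission
  imports Defs
begin

text \<open>Chaining along the dyadic levels. The maximum of a path over the dyadic points of level
  \<open>n + 1\<close> exceeds its maximum over level \<open>n\<close> by at most the positive part \<open>D\<^sub>n\<^sub>+\<^sub>1\<close> of the largest
  increment \<open>f ((2j+1)/2\<^sup>n\<^sup>+\<^sup>1) - f (2j/2\<^sup>n\<^sup>+\<^sup>1)\<close>, so the expected dyadic maximum of level \<open>n\<close> is at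
  most \<open>E X 0 + \<Sum>k\<le>n. E D\<^sub>k\<close>. At level \<open>k\<close> the increments are centered normal with variance at most
  \<open>2\<sigma>\<^sup>2\<beta>/2\<^sup>k\<close>, and the Chernoff-type bound \<open>E max(0, max\<^sub>j d\<^sub>j) \<le> ln (N + 1)/\<lambda> + \<lambda>S/2\<close> for
  \<open>N\<close> centered normals of variance at most \<open>S\<close> makes \<open>E D\<^sub>k\<close> decay like \<open>k 2\<^sup>-\<^sup>k\<^sup>/\<^sup>2\<close>. Summing with a
  suitable \<open>\<lambda>\<close> per level gives \<open>8.6 \<sigma> \<surd>\<beta>\<close>. By continuity the dyadic maxima increase to the
  supremum over \<open>[0, 1]\<close>, and monotone convergence passes the bound to the limit.\<close>

lemma le_ln_minus_one_plus_exp_div: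
  fixes A t :: real
  assumes "A > 0"
  shows "t \<le> ln A - 1 + exp t / A"
proof -
  have "ln (exp t / A) \<le> exp t / A - 1"
    using assms by (intro ln_le_minus_one) simp
  then show ?thesis
    using assms by (simp add: ln_div)
qed

lemma integrable_Max:
  fixes f :: "'i \<Rightarrow> 'a \<Rightarrow> real"
  assumes "finite I" "I \<noteq> {}" "\<And>i. i \<in> I \<Longrightarrow> integrable M (f i)"
  shows "integrable M (\<lambda>\<omega>. Max ((\<lambda>i. f i \<omega>) ` I))"
  using assms
proof (induction I rule: finite_ne_induct)
  case (insert i I)
  have "(\<lambda>\<omega>. Max ((\<lambda>i. f i \<omega>) ` insert i I)) = (\<lambda>\<omega>. max (f i \<omega>) (Max ((\<lambda>i. f i \<omega>) ` I)))"
    using insert by simp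
  then show ?case
    using insert by simp
qed simp

lemma integral_le_of_tendsto_mono:
  fixes f :: "nat \<Rightarrow> 'a \<Rightarrow> real"
  assumes int: "\<And>n. integrable M (f n)"
    and mono: "\<And>n x. x \<in> space M \<Longrightarrow> f n x \<le> f (Suc n) x"
    and lim: "\<And>x. x \<in> space M \<Longrightarrow> (\<lambda>n. f n x) \<longlonglongrightarrow> g x"
    and bound: "\<And>n. integral\<^sup>L M (f n) \<le> C"
  shows "integrable M g" "integral\<^sup>L M g \<le> C"
proof -
  have "incseq (\<lambda>n. integral\<^sup>L M (f n))"
    by (intro incseq_SucI integral_mono int mono)
  moreover have "bdd_above (range (\<lambda>n. integral\<^sup>L M (f n)))"
    by (rule bdd_aboveI2[where M = C]) (rule bound)
  ultimately have ilim: "(\<lambda>n. integral\<^sup>L M (f n)) \<longlonglongrightarrow> (SUP n. integral\<^sup>L M (f n))"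
    by (intro LIMSEQ_incseq_SUP)
  have ae_mono: "AE x in M. mono (\<lambda>n. f n x)"
    by (rule AE_I2) (simp add: mono_iff_le_Suc mono)
  have ae_lim: "AE x in M. (\<lambda>n. f n x) \<longlonglongrightarrow> g x"
    by (rule AE_I2) (rule lim)
  have meas: "g \<in> borel_measurable M"
    by (rule borel_measurable_LIMSEQ_real[OF lim borel_measurable_integrable[OF int]])
  show "integrable M g"
    by (rule integrable_monotone_convergence[OF int ae_mono ae_lim ilim meas])
  have "(SUP n. integral\<^sup>L M (f n)) \<le> C"
    using bound by (intro cSUP_least) auto
  then show "integral\<^sup>L M g \<le> C"
    using integral_monotone_convergence[OF int ae_mono ae_lim ilim meas] by simp
qed

section \<open>Centered normal variables\<close>

lemma normal_density_mult_exp: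
  assumes "s > 0"
  shows "normal_density 0 s x * exp (l * x) = exp (l\<^sup>2 * s\<^sup>2 / 2) * normal_density (l * s\<^sup>2) s x"
proof -
  have "- (x - 0)\<^sup>2 / (2 * s\<^sup>2) + l * x = l\<^sup>2 * s\<^sup>2 / 2 + (- (x - l * s\<^sup>2)\<^sup>2 / (2 * s\<^sup>2))"
    using assms by (simp add: field_simps power2_eq_square)
  then have "exp (- (x - 0)\<^sup>2 / (2 * s\<^sup>2)) * exp (l * x)
      = exp (l\<^sup>2 * s\<^sup>2 / 2) * exp (- (x - l * s\<^sup>2)\<^sup>2 / (2 * s\<^sup>2))"
    by (metis exp_add)
  then show ?thesis
    unfolding normal_density_def by (simp add: mult_ac)
qed

lemma
  assumes D: "distributed M lborel Y (normal_density 0 s)" and s: "s > 0"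
  shows integrable_exp_normal_distributed: "integrable M (\<lambda>\<omega>. exp (l * Y \<omega>))"
    and integral_exp_normal_distributed: "(\<integral>\<omega>. exp (l * Y \<omega>) \<partial>M) = exp (l\<^sup>2 * s\<^sup>2 / 2)"
proof -
  have eq: "(\<lambda>x. normal_density 0 s x * exp (l * x)) = (\<lambda>x. exp (l\<^sup>2 * s\<^sup>2 / 2) * normal_density (l * s\<^sup>2) s x)"
    using normal_density_mult_exp[OF s] by auto
  have "integrable lborel (\<lambda>x. normal_density 0 s x * exp (l * x))"
    unfolding eq using s by auto
  then show "integrable M (\<lambda>\<omega>. exp (l * Y \<omega>))"
    using distributed_integrable[OF D, of "\<lambda>x. exp (l * x)"] by simp
  have "(\<integral>\<omega>. exp (l * Y \<omega>) \<partial>M) = (\<integral>x. normal_density 0 s x * exp (l * x) \<partial>lborel)"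
    using distributed_integral[OF D, of "\<lambda>x. exp (l * x)"] by simp
  also have "\<dots> = exp (l\<^sup>2 * s\<^sup>2 / 2)"
    unfolding eq using s by simp
  finally show "(\<integral>\<omega>. exp (l * Y \<omega>) \<partial>M) = exp (l\<^sup>2 * s\<^sup>2 / 2)" .
qed

lemma
  assumes D: "distributed M lborel Y (normal_density 0 s)" and s: "s > 0"
  shows integrable_normal_distributed: "integrable M Y"
    and integral_normal_distributed: "(\<integral>\<omega>. Y \<omega> \<partial>M) = 0"
proof -
  show "integrable M Y"
    by (rule distributed_integrable_var[OF D]) (use integrable_normal_moment_nz_1[OF s] in auto)
  show "(\<integral>\<omega>. Y \<omega> \<partial>M) = 0"
    using integral_normal_moment_nz_1[OF s, of 0] distributed_integral[OF D, of "\<lambda>x. x"] by simp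
qed

text \<open>The right-hand side is the tangent at \<open>A\<close> of \<open>ln Z\<close>, \<open>Z = 1 + \<Sum>\<^sub>j exp (l x\<^sub>j)\<close>, divided by \<open>l\<close>;
  by concavity it dominates \<open>ln Z / l \<ge> max 0 (max\<^sub>j x\<^sub>j)\<close>, and unlike \<open>ln Z\<close> it is linear in \<open>Z\<close>.\<close>

lemma max_le_tangent_log_sum_exp:
  fixes x :: "'i \<Rightarrow> real" and l A :: real
  assumes J: "finite J" "J \<noteq> {}" and l: "l > 0" and A: "A > 0"
  shows "max 0 (Max (x ` J)) \<le> (ln A - 1 + (1 + (\<Sum>j\<in>J. exp (l * x j))) / A) / l"
proof -
  define Z where "Z = 1 + (\<Sum>j\<in>J. exp (l * x j))"
  have tangent: "t \<le> ln A - 1 + Z / A" if "exp t \<le> Z" for t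
    using le_ln_minus_one_plus_exp_div[OF A, of t] that A by (smt (verit) divide_right_mono)
  have "y * l \<le> ln A - 1 + Z / A" if y: "y \<in> insert 0 (x ` J)" for y
  proof (cases "y = 0")
    case True
    then show ?thesis
      using tangent[of 0] by (simp add: Z_def sum_nonneg)
  next
    case False
    then obtain j where "j \<in> J" "y = x j"
      using y by auto
    moreover have "exp (l * x j) \<le> Z"
      using J \<open>j \<in> J\<close> unfolding Z_def by (smt (verit) exp_gt_zero member_le_sum)
    ultimately show ?thesis
      using tangent[of "l * x j"] by (simp add: mult.commute)
  qed
  then have "y \<le> (ln A - 1 + Z / A) / l" if "y \<in> insert 0 (x ` J)" for y
    using that l by (simp add: pos_le_divide_eq)
  then show ?thesis
    using J by (simp add: Z_def)
qed

lemma integral_max_centered_normals_le: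
  fixes d :: "'i \<Rightarrow> 'a \<Rightarrow> real" and l S :: real
  assumes "prob_space M" and J: "finite J" "J \<noteq> {}" and l: "l > 0" and S: "S \<ge> 0"
    and normal: "\<And>j. j \<in> J \<Longrightarrow> \<exists>v. 0 < v \<and> v \<le> S \<and> distributed M lborel (d j) (normal_density 0 (sqrt v))"
  shows "(\<integral>\<omega>. max 0 (Max ((\<lambda>j. d j \<omega>) ` J)) \<partial>M) \<le> ln (real (card J) + 1) / l + l * S / 2"
proof -
  interpret prob_space M by fact
  have d: "integrable M (d j)" "integrable M (\<lambda>\<omega>. exp (l * d j \<omega>))"
    "(\<integral>\<omega>. exp (l * d j \<omega>) \<partial>M) \<le> exp (l\<^sup>2 * S / 2)" if "j \<in> J" for j
  proof -
    obtain v where v: "0 < v" "v \<le> S" and D: "distributed M lborel (d j) (normal_density 0 (sqrt v))"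
      using normal[OF \<open>j \<in> J\<close>] by blast
    show "integrable M (d j)" "integrable M (\<lambda>\<omega>. exp (l * d j \<omega>))"
      using D v by (auto intro: integrable_normal_distributed integrable_exp_normal_distributed)
    show "(\<integral>\<omega>. exp (l * d j \<omega>) \<partial>M) \<le> exp (l\<^sup>2 * S / 2)"
      using integral_exp_normal_distributed[OF D, of l] v by (simp add: mult_left_mono)
  qed
  define A where "A = (real (card J) + 1) * exp (l\<^sup>2 * S / 2)"
  define H where "H \<omega> = (ln A - 1 + 1 / A) / l + (\<Sum>j\<in>J. exp (l * d j \<omega>)) / (A * l)" for \<omega>
  have A: "A > 0"
    unfolding A_def by (simp add: add_pos_nonneg)
  have "H \<omega> = (ln A - 1 + (1 + (\<Sum>j\<in>J. exp (l * d j \<omega>))) / A) / l" for \<omega>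
    using A l by (simp add: H_def field_simps)
  then have "max 0 (Max ((\<lambda>j. d j \<omega>) ` J)) \<le> H \<omega>" for \<omega>
    using max_le_tangent_log_sum_exp[OF J l A, of "\<lambda>j. d j \<omega>"] by simp
  then have "(\<integral>\<omega>. max 0 (Max ((\<lambda>j. d j \<omega>) ` J)) \<partial>M) \<le> (\<integral>\<omega>. H \<omega> \<partial>M)"
    unfolding H_def using J d(1,2) by (intro integral_mono integrable_max integrable_const integrable_Max) auto
  also have "\<dots> = (ln A - 1 + 1 / A) / l + (\<Sum>j\<in>J. \<integral>\<omega>. exp (l * d j \<omega>) \<partial>M) / (A * l)"
    unfolding H_def using d(2) by (simp add: integral_sum prob_space)
  also have "\<dots> \<le> (ln A - 1 + 1 / A) / l + (\<Sum>j\<in>J. exp (l\<^sup>2 * S / 2)) / (A * l)"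
    using d(3) A l by (intro add_left_mono divide_right_mono sum_mono) auto
  also have "\<dots> = (ln A - 1 + (1 + real (card J) * exp (l\<^sup>2 * S / 2)) / A) / l"
    using A l by (simp add: field_simps)
  also have "\<dots> \<le> ln A / l"
  proof -
    have "(1 + real (card J) * exp (l\<^sup>2 * S / 2)) / A \<le> 1"
      using S A by (simp add: A_def algebra_simps)
    then show ?thesis
      using l by (simp add: divide_right_mono)
  qed
  also have "\<dots> = ln (real (card J) + 1) / l + l * S / 2"
    using l by (simp add: A_def ln_mult add_divide_distrib power2_eq_square)
  finally show ?thesis .
qed

section \<open>Centered Gaussian processes\<close>

lemma centered_gaussian_process_prob_space:
  "centered_gaussian_process M X T K \<Longrightarrow> prob_space M"
  unfolding centered_gaussian_process_def by blast

lemma centered_gaussian_process_distributed: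
  assumes "centered_gaussian_process M X T K" "finite F" "F \<subseteq> T"
    and "0 < (\<Sum>s\<in>F. \<Sum>t\<in>F. c s * c t * K s t)"
  shows "distributed M lborel (\<lambda>\<omega>. \<Sum>t\<in>F. c t * X t \<omega>)
    (normal_density 0 (sqrt (\<Sum>s\<in>F. \<Sum>t\<in>F. c s * c t * K s t)))"
proof -
  have "\<forall>F c. finite F \<and> F \<subseteq> T \<longrightarrow>
      (let v = (\<Sum>s\<in>F. \<Sum>t\<in>F. c s * c t * K s t) in
        if v = 0 then (AE \<omega> in M. (\<Sum>t\<in>F. c t * X t \<omega>) = 0)
        else distributed M lborel (\<lambda>\<omega>. \<Sum>t\<in>F. c t * X t \<omega>) (normal_density 0 (sqrt v)))"
    using assms(1) unfolding centered_gaussian_process_def by blast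
  then show ?thesis
    using assms(2-4) by (auto simp: Let_def)
qed

lemma centered_gaussian_process_distributed_point:
  assumes "centered_gaussian_process M X T K" "t \<in> T" "0 < K t t"
  shows "distributed M lborel (X t) (normal_density 0 (sqrt (K t t)))"
  using centered_gaussian_process_distributed[OF assms(1), of "{t}" "\<lambda>_. 1"] assms(2,3) by simp

lemma centered_gaussian_process_distributed_diff:
  assumes "centered_gaussian_process M X T K" "a \<in> T" "b \<in> T" "a \<noteq> b"
    and "0 < K a a + K b b - K a b - K b a"
  shows "distributed M lborel (\<lambda>\<omega>. X a \<omega> - X b \<omega>) (normal_density 0 (sqrt (K a a + K b b - K a b - K b a)))"
proof -
  define c where "c u = (if u = a then 1 else - 1 :: real)" for u
  have "(\<Sum>s\<in>{a, b}. \<Sum>t\<in>{a, b}. c s * c t * K s t) = K a a + K b b - K a b - K b a"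
    using assms(4) by (simp add: c_def)
  moreover have "(\<lambda>\<omega>. \<Sum>t\<in>{a, b}. c t * X t \<omega>) = (\<lambda>\<omega>. X a \<omega> - X b \<omega>)"
    using assms(4) by (simp add: c_def)
  ultimately show ?thesis
    using centered_gaussian_process_distributed[OF assms(1), of "{a, b}" c] assms(2,3,5) by simp
qed

lemma exp_covariance_increment_distributed:
  assumes \<beta>: "\<beta> > 0" and \<sigma>: "\<sigma> > 0"
    and G: "centered_gaussian_process M X T (\<lambda>x y. \<sigma>\<^sup>2 * exp (- \<beta> * \<bar>x - y\<bar>))"
    and ab: "a \<in> T" "b \<in> T" "a \<noteq> b"
  shows "\<exists>v. 0 < v \<and> v \<le> 2 * \<sigma>\<^sup>2 * \<beta> * \<bar>a - b\<bar> \<and>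
    distributed M lborel (\<lambda>\<omega>. X a \<omega> - X b \<omega>) (normal_density 0 (sqrt v))"
proof (intro exI conjI)
  let ?v = "2 * \<sigma>\<^sup>2 * (1 - exp (- \<beta> * \<bar>a - b\<bar>))"
  show "0 < ?v"
    using \<beta> \<sigma> ab by simp
  have "1 - \<beta> * \<bar>a - b\<bar> \<le> exp (- \<beta> * \<bar>a - b\<bar>)"
    using exp_ge_add_one_self[of "- \<beta> * \<bar>a - b\<bar>"] by simp
  then show "?v \<le> 2 * \<sigma>\<^sup>2 * \<beta> * \<bar>a - b\<bar>"
    by (simp add: mult_left_mono)
  show "distributed M lborel (\<lambda>\<omega>. X a \<omega> - X b \<omega>) (normal_density 0 (sqrt ?v))"
    using centered_gaussian_process_distributed_diff[OF G ab] \<open>0 < ?v\<close>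
    by (simp add: abs_minus_commute algebra_simps)
qed

lemma
  assumes \<sigma>: "\<sigma> > 0"
    and G: "centered_gaussian_process M X T (\<lambda>x y. \<sigma>\<^sup>2 * exp (- \<beta> * \<bar>x - y\<bar>))" and t: "t \<in> T"
  shows integrable_exp_covariance_process: "integrable M (X t)"
    and integral_exp_covariance_process: "(\<integral>\<omega>. X t \<omega> \<partial>M) = 0"
proof -
  have "distributed M lborel (X t) (normal_density 0 \<sigma>)"
    using centered_gaussian_process_distributed_point[OF G t] \<sigma> by simp
  then show "integrable M (X t)" "(\<integral>\<omega>. X t \<omega> \<partial>M) = 0"
    using \<sigma> by (auto intro: integrable_normal_distributed integral_normal_distributed)
qed

section \<open>Dyadic chaining\<close>

definition dyadic_max :: "(real \<Rightarrow> real) \<Rightarrow> nat \<Rightarrow> real" where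
  "dyadic_max f n = Max ((\<lambda>i. f (real i / 2 ^ n)) ` {0..2 ^ n})"

text \<open>Level \<open>k \<ge> 1\<close> adds the \<open>2\<^sup>k\<^sup>-\<^sup>1\<close> odd points \<open>(2j + 1)/2\<^sup>k\<close>; level \<open>0\<close> is read as adding the
  point \<open>1\<close> to \<open>{0}\<close>.\<close>

definition odd_dyadic_count :: "nat \<Rightarrow> nat" where
  "odd_dyadic_count k = (if k = 0 then 1 else 2 ^ (k - 1))"

definition dyadic_increment_max :: "(real \<Rightarrow> real) \<Rightarrow> nat \<Rightarrow> real" where
  "dyadic_increment_max f k = max 0 (Max ((\<lambda>j. f (real (2 * j + 1) / 2 ^ k) - f (real (2 * j) / 2 ^ k))
     ` {..<odd_dyadic_count k}))"

lemma odd_dyadic_count_pos: "0 < odd_dyadic_count k"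
  by (simp add: odd_dyadic_count_def)

lemma dyadic_mem_unit_interval:
  assumes "i \<le> 2 ^ n"
  shows "real i / 2 ^ n \<in> {0..1}"
proof -
  have "real i \<le> 2 ^ n"
    using assms by simp
  then show ?thesis
    by (simp add: field_simps)
qed

lemma odd_dyadic_le: "j < odd_dyadic_count k \<Longrightarrow> 2 * j + 1 \<le> 2 ^ k"
  by (cases k) (auto simp: odd_dyadic_count_def)

lemma odd_dyadic_mem_unit_interval:
  assumes "j < odd_dyadic_count k"
  shows "real (2 * j + 1) / 2 ^ k \<in> {0..1}" "real (2 * j) / 2 ^ k \<in> {0..1}"
proof -
  have "2 * j + 1 \<le> 2 ^ k" "2 * j \<le> 2 ^ k"
    using odd_dyadic_le[OF assms] by auto
  then show "real (2 * j + 1) / 2 ^ k \<in> {0..1}" "real (2 * j) / 2 ^ k \<in> {0..1}"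
    by (blast intro: dyadic_mem_unit_interval)+
qed

lemma le_dyadic_max: "i \<le> 2 ^ n \<Longrightarrow> f (real i / 2 ^ n) \<le> dyadic_max f n"
  unfolding dyadic_max_def by (intro Max_ge) auto

lemma dyadic_max_le_Suc: "dyadic_max f n \<le> dyadic_max f (Suc n)"
  unfolding dyadic_max_def [of f n]
proof (intro Max.boundedI)
  fix y
  assume "y \<in> (\<lambda>i. f (real i / 2 ^ n)) ` {0..2 ^ n}"
  then obtain i where "i \<le> 2 ^ n" "y = f (real i / 2 ^ n)"
    by auto
  then show "y \<le> dyadic_max f (Suc n)"
    using le_dyadic_max[of "2 * i" "Suc n" f] by simp
qed auto

lemma dyadic_increment_max_nonneg: "0 \<le> dyadic_increment_max f k"
  by (simp add: dyadic_increment_max_def)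

lemma le_dyadic_increment_max:
  "j < odd_dyadic_count k \<Longrightarrow> f (real (2 * j + 1) / 2 ^ k) - f (real (2 * j) / 2 ^ k) \<le> dyadic_increment_max f k"
  unfolding dyadic_increment_max_def by (intro max.coboundedI2 Max_ge) auto

lemma dyadic_max_0_le: "dyadic_max f 0 \<le> f 0 + dyadic_increment_max f 0"
proof -
  have "f 1 - f 0 \<le> dyadic_increment_max f 0"
    using le_dyadic_increment_max[of 0 0 f] by (simp add: odd_dyadic_count_def)
  moreover have "{0..2 ^ 0} = {0, 1 :: nat}"
    by auto
  ultimately show ?thesis
    using dyadic_increment_max_nonneg[of f 0] by (auto simp: dyadic_max_def)
qed

lemma dyadic_max_Suc_le: "dyadic_max f (Suc n) \<le> dyadic_max f n + dyadic_increment_max f (Suc n)"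
  unfolding dyadic_max_def [of f "Suc n"]
proof (intro Max.boundedI)
  fix y
  assume "y \<in> (\<lambda>i. f (real i / 2 ^ Suc n)) ` {0..2 ^ Suc n}"
  then obtain i where i: "i \<le> 2 ^ Suc n" and y: "y = f (real i / 2 ^ Suc n)"
    by auto
  have coarse: "f (real (2 * j) / 2 ^ Suc n) \<le> dyadic_max f n" if "j \<le> 2 ^ n" for j
    using le_dyadic_max[OF that, of f] by simp
  show "y \<le> dyadic_max f n + dyadic_increment_max f (Suc n)"
  proof (cases "even i")
    case True
    then obtain j where "i = 2 * j"
      by (auto elim: evenE)
    then show ?thesis
      using coarse[of j] i y dyadic_increment_max_nonneg[of f "Suc n"] by auto
  next
    case False
    then obtain j where j: "i = 2 * j + 1"
      using oddE by blast
    with i have j_lt: "j < odd_dyadic_count (Suc n)"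
      by (simp add: odd_dyadic_count_def)
    then have "j \<le> 2 ^ n"
      by (simp add: odd_dyadic_count_def)
    have "y = f (real (2 * j) / 2 ^ Suc n) + (f (real (2 * j + 1) / 2 ^ Suc n) - f (real (2 * j) / 2 ^ Suc n))"
      using y j by simp
    then show ?thesis
      using coarse[OF \<open>j \<le> 2 ^ n\<close>] le_dyadic_increment_max[OF j_lt, of f] by linarith
  qed
qed auto

lemma tendsto_dyadic_floor: "(\<lambda>n. of_int \<lfloor>x * 2 ^ n\<rfloor> / 2 ^ n) \<longlonglongrightarrow> (x :: real)"
proof (rule tendsto_sandwich)
  show "\<forall>\<^sub>F n in sequentially. x - (1 / 2) ^ n \<le> of_int \<lfloor>x * 2 ^ n\<rfloor> / 2 ^ n"
  proof (intro always_eventually allI)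
    fix n :: nat
    have "(x * 2 ^ n - 1) / 2 ^ n \<le> of_int \<lfloor>x * 2 ^ n\<rfloor> / 2 ^ n"
      using real_of_int_floor_gt_diff_one[of "x * 2 ^ n"] by (intro divide_right_mono) auto
    then show "x - (1 / 2) ^ n \<le> of_int \<lfloor>x * 2 ^ n\<rfloor> / 2 ^ n"
      by (simp add: diff_divide_distrib power_one_over)
  qed
  show "\<forall>\<^sub>F n in sequentially. of_int \<lfloor>x * 2 ^ n\<rfloor> / 2 ^ n \<le> x"
    using of_int_floor_le by (intro always_eventually allI) (simp add: pos_divide_le_eq)
  have "(\<lambda>n. x - (1 / 2) ^ n) \<longlonglongrightarrow> x - 0"
    by (intro tendsto_diff tendsto_const LIMSEQ_realpow_zero) auto
  then show "(\<lambda>n. x - (1 / 2) ^ n) \<longlonglongrightarrow> x"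
    by simp
qed simp

lemma tendsto_dyadic_max:
  assumes f: "continuous_on {0..1} f"
  shows "(\<lambda>n. dyadic_max f n) \<longlonglongrightarrow> Sup (f ` {0..1})"
proof -
  obtain x where x: "x \<in> {0..1}" and max: "\<And>y. y \<in> {0..1} \<Longrightarrow> f y \<le> f x"
    using continuous_attains_sup[OF compact_Icc _ f] by auto
  have Sup: "Sup (f ` {0..1}) = f x"
    using x max by (intro cSup_eq_maximum) auto
  define i where "i n = nat \<lfloor>x * 2 ^ n\<rfloor>" for n
  have i: "real (i n) = of_int \<lfloor>x * 2 ^ n\<rfloor>" for n
    using x by (simp add: i_def)
  have i_le: "i n \<le> 2 ^ n" for n
  proof -
    have "x * 2 ^ n \<le> 2 ^ n"
      using x mult_left_le_one_le[of "2 ^ n" x] by simp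
    then have "real (i n) \<le> 2 ^ n"
      unfolding i using of_int_floor_le[of "x * 2 ^ n"] by linarith
    then show ?thesis
      by simp
  qed
  have "(\<lambda>n. real (i n) / 2 ^ n) \<longlonglongrightarrow> x"
    unfolding i by (rule tendsto_dyadic_floor)
  then have lower: "(\<lambda>n. f (real (i n) / 2 ^ n)) \<longlonglongrightarrow> f x"
    using dyadic_mem_unit_interval[OF i_le]
    by (intro continuous_on_tendsto_compose[OF f _ x] always_eventually) auto
  have upper: "dyadic_max f n \<le> f x" for n
    unfolding dyadic_max_def using max dyadic_mem_unit_interval by (intro Max.boundedI) auto
  show ?thesis
    unfolding Sup
  proof (rule tendsto_sandwich[OF _ _ lower tendsto_const])
    show "\<forall>\<^sub>F n in sequentially. f (real (i n) / 2 ^ n) \<le> dyadic_max f n"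
      using le_dyadic_max[OF i_le] by (intro always_eventually allI)
    show "\<forall>\<^sub>F n in sequentially. dyadic_max f n \<le> f x"
      using upper by (intro always_eventually allI)
  qed
qed

lemma
  fixes X :: "real \<Rightarrow> 'a \<Rightarrow> real"
  assumes int: "\<And>t. t \<in> {0..1} \<Longrightarrow> integrable M (X t)"
  shows integrable_dyadic_max: "integrable M (\<lambda>\<omega>. dyadic_max (\<lambda>x. X x \<omega>) n)"
    and integrable_dyadic_increment_max: "integrable M (\<lambda>\<omega>. dyadic_increment_max (\<lambda>x. X x \<omega>) n)"
proof -
  show "integrable M (\<lambda>\<omega>. dyadic_max (\<lambda>x. X x \<omega>) n)"
    unfolding dyadic_max_def using int dyadic_mem_unit_interval by (intro integrable_Max) auto
  show "integrable M (\<lambda>\<omega>. dyadic_increment_max (\<lambda>x. X x \<omega>) n)"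
    unfolding dyadic_increment_max_def using int odd_dyadic_mem_unit_interval odd_dyadic_count_pos
    by (intro integrable_max integrable_zero integrable_Max Bochner_Integration.integrable_diff)
      (auto simp: lessThan_empty_iff)
qed

lemma integral_dyadic_max_le:
  fixes X :: "real \<Rightarrow> 'a \<Rightarrow> real"
  assumes int: "\<And>t. t \<in> {0..1} \<Longrightarrow> integrable M (X t)"
  shows "(\<integral>\<omega>. dyadic_max (\<lambda>x. X x \<omega>) n \<partial>M)
    \<le> (\<integral>\<omega>. X 0 \<omega> \<partial>M) + (\<Sum>k\<le>n. \<integral>\<omega>. dyadic_increment_max (\<lambda>x. X x \<omega>) k \<partial>M)"
proof (induction n)
  note max_int = integrable_dyadic_max[OF int] and incr_int = integrable_dyadic_increment_max[OF int]
  have X0: "integrable M (X 0)"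
    using int by simp
  {
    case 0
    have "(\<integral>\<omega>. dyadic_max (\<lambda>x. X x \<omega>) 0 \<partial>M)
        \<le> (\<integral>\<omega>. X 0 \<omega> + dyadic_increment_max (\<lambda>x. X x \<omega>) 0 \<partial>M)"
      by (intro integral_mono Bochner_Integration.integrable_add max_int incr_int X0 dyadic_max_0_le)
    then show ?case
      using X0 incr_int by simp
  next
    case (Suc n)
    have "(\<integral>\<omega>. dyadic_max (\<lambda>x. X x \<omega>) (Suc n) \<partial>M)
        \<le> (\<integral>\<omega>. dyadic_max (\<lambda>x. X x \<omega>) n + dyadic_increment_max (\<lambda>x. X x \<omega>) (Suc n) \<partial>M)"
      by (intro integral_mono Bochner_Integration.integrable_add max_int incr_int dyadic_max_Suc_le)
    then show ?case
      using Suc max_int incr_int by simp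
  }
qed

lemma integral_dyadic_increment_max_le:
  assumes \<beta>: "\<beta> > 0" and \<sigma>: "\<sigma> > 0" and \<mu>: "\<mu> > 0"
    and G: "centered_gaussian_process M X {0..1} (\<lambda>x y. \<sigma>\<^sup>2 * exp (- \<beta> * \<bar>x - y\<bar>))"
  shows "(\<integral>\<omega>. dyadic_increment_max (\<lambda>x. X x \<omega>) k \<partial>M)
    \<le> \<sigma> * sqrt \<beta> * ((ln (real (odd_dyadic_count k) + 1) + \<mu>\<^sup>2) / (\<mu> * sqrt (2 ^ k)))"
proof -
  define l where "l = \<mu> * sqrt (2 ^ k) / (\<sigma> * sqrt \<beta>)"
  define S where "S = 2 * \<sigma>\<^sup>2 * \<beta> / 2 ^ k"
  have "\<exists>v. 0 < v \<and> v \<le> S \<and> distributed M lborel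
      (\<lambda>\<omega>. X (real (2 * j + 1) / 2 ^ k) \<omega> - X (real (2 * j) / 2 ^ k) \<omega>) (normal_density 0 (sqrt v))"
    if "j \<in> {..<odd_dyadic_count k}" for j
  proof -
    have "real (2 * j + 1) / 2 ^ k \<in> {0..1}" "real (2 * j) / 2 ^ k \<in> {0..1}"
      using odd_dyadic_mem_unit_interval that by auto
    moreover have "real (2 * j + 1) / 2 ^ k \<noteq> real (2 * j) / 2 ^ k"
      by simp
    ultimately obtain v where "0 < v" "v \<le> 2 * \<sigma>\<^sup>2 * \<beta> * \<bar>real (2 * j + 1) / 2 ^ k - real (2 * j) / 2 ^ k\<bar>"
      "distributed M lborel (\<lambda>\<omega>. X (real (2 * j + 1) / 2 ^ k) \<omega> - X (real (2 * j) / 2 ^ k) \<omega>)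
        (normal_density 0 (sqrt v))"
      using exp_covariance_increment_distributed[OF \<beta> \<sigma> G] by blast
    moreover have "\<bar>real (2 * j + 1) / 2 ^ k - real (2 * j) / 2 ^ k\<bar> = 1 / 2 ^ k"
      by (simp add: field_simps)
    ultimately show ?thesis
      by (auto simp: S_def)
  qed
  then have "(\<integral>\<omega>. dyadic_increment_max (\<lambda>x. X x \<omega>) k \<partial>M)
      \<le> ln (real (card {..<odd_dyadic_count k}) + 1) / l + l * S / 2"
    unfolding dyadic_increment_max_def
    using centered_gaussian_process_prob_space[OF G] odd_dyadic_count_pos \<beta> \<sigma> \<mu>
    by (intro integral_max_centered_normals_le) (auto simp: l_def S_def lessThan_empty_iff)
  also have "\<dots> = \<sigma> * sqrt \<beta> * ((ln (real (odd_dyadic_count k) + 1) + \<mu>\<^sup>2) / (\<mu> * sqrt (2 ^ k)))"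
  proof -
    have "L / (\<mu> * t / (\<sigma> * r)) + \<mu> * t / (\<sigma> * r) * (2 * \<sigma>\<^sup>2 * r\<^sup>2 / t\<^sup>2) / 2
        = \<sigma> * r * ((L + \<mu>\<^sup>2) / (\<mu> * t))" if "r > 0" "t > 0" for L r t :: real
      using that \<sigma> \<mu> by (simp add: field_simps power2_eq_square)
    from this[of "sqrt \<beta>" "sqrt (2 ^ k)" "ln (real (odd_dyadic_count k) + 1)"] show ?thesis
      using \<beta> by (simp add: l_def S_def)
  qed
  finally show ?thesis .
qed

section \<open>The numerical series\<close>

lemma ln_3_div_2_le: "ln (3 / 2) \<le> (0.42 :: real)"
proof -
  have "3 / 2 \<le> 1 + 0.42 + 0.42\<^sup>2 / (2 :: real)"
    by (simp add: power2_eq_square)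
  also have "\<dots> \<le> exp 0.42"
    by (rule exp_lower_Taylor_quadratic) simp
  finally have "3 / 2 \<le> exp (0.42 :: real)" .
  then show ?thesis
    using ln_le_cancel_iff[of "3 / 2" "exp 0.42"] by simp
qed

lemma inverse_sqrt_power_2_le: "1 / sqrt (2 ^ k) \<le> (0.7072 :: real) ^ k"
proof -
  have "1.4142 \<le> sqrt (2 :: real)"
    by (rule real_le_rsqrt) (simp add: power2_eq_square)
  then have "1 / sqrt 2 \<le> (0.7072 :: real)"
    by (simp add: field_simps)
  then have "(1 / sqrt 2) ^ k \<le> (0.7072 :: real) ^ k"
    by (intro power_mono) auto
  then show ?thesis
    by (simp add: real_sqrt_power power_divide)
qed

text \<open>The Chernoff parameter at level \<open>k\<close> is \<open>\<lambda> = \<mu>\<^sub>k \<surd>(2\<^sup>k) / (\<sigma> \<surd>\<beta>)\<close> with \<open>\<mu>\<^sub>k\<close> = \<open>chaining_scale k\<close>,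
  tuned numerically.\<close>

definition chaining_scale :: "nat \<Rightarrow> real" where
  "chaining_scale k = (if k \<le> 1 then 0.85 else if k = 2 then 1.06 else 1.9)"

definition chaining_log_bound :: "nat \<Rightarrow> real" where
  "chaining_log_bound k = (if k \<le> 1 then 0.71 else 0.71 * (real k - 1) + 0.42)"

lemma ln_odd_dyadic_count_le: "ln (real (odd_dyadic_count k) + 1) \<le> chaining_log_bound k"
proof (cases "k \<le> 1")
  case True
  then show ?thesis
    using ln2_le_25_over_36 by (simp add: odd_dyadic_count_def chaining_log_bound_def)
next
  case False
  have "real (odd_dyadic_count k) + 1 \<le> 3 / 2 * 2 ^ (k - 1)"
    using False power_increasing[of 1 "k - 1" "2 :: real"] by (simp add: odd_dyadic_count_def)
  then have "ln (real (odd_dyadic_count k) + 1) \<le> ln (3 / 2 * 2 ^ (k - 1))"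
    by simp
  also have "\<dots> = ln (3 / 2) + ln (2 ^ (k - 1))"
    by (rule ln_mult_pos) simp_all
  also have "\<dots> = ln (3 / 2) + real (k - 1) * ln 2"
    by (simp add: ln_realpow)
  also have "\<dots> \<le> 0.42 + real (k - 1) * 0.71"
    using ln_3_div_2_le ln2_le_25_over_36 by (intro add_mono mult_left_mono) auto
  finally show ?thesis
    using False by (simp add: chaining_log_bound_def of_nat_diff algebra_simps)
qed

lemma chaining_bound_sum_le:
  "(\<Sum>k\<le>n. (chaining_log_bound k + (chaining_scale k)\<^sup>2) / chaining_scale k * 0.7072 ^ k) \<le> 8.6"
proof -
  define b where "b k = (chaining_log_bound k + (chaining_scale k)\<^sup>2) / chaining_scale k * 0.7072 ^ k" for k
  have b_nonneg: "0 \<le> b k" for k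
    by (simp add: b_def chaining_log_bound_def chaining_scale_def)
  text \<open>The remainder term \<open>0.7072\<^sup>n\<^sup>+\<^sup>1 (1.28 (n + 1) + 9.1)\<close> dominates the tail of the series.\<close>
  have tail: "(\<Sum>k\<le>n. b k) + 0.7072 ^ (n + 1) * (1.28 * real (n + 1) + 9.1) \<le> 8.6" if "2 \<le> n" for n
    using that
  proof (induction n rule: dec_induct)
    case base
    show ?case
      by (simp add: b_def chaining_log_bound_def chaining_scale_def numeral_2_eq_2)
  next
    case (step n)
    have "((0.71 * real n + 0.42) + 1.9\<^sup>2) / 1.9 + 0.7072 * (1.28 * real (n + 2) + 9.1)
        \<le> 1.28 * real (n + 1) + (9.1 :: real)"
      by (simp add: field_simps)
    then have decrease: "0.7072 ^ (n + 1) * (((0.71 * real n + 0.42) + 1.9\<^sup>2) / 1.9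
          + 0.7072 * (1.28 * real (n + 2) + 9.1))
        \<le> 0.7072 ^ (n + 1) * (1.28 * real (n + 1) + (9.1 :: real))"
      by (intro mult_left_mono) auto
    have b_Suc: "b (Suc n) = 0.7072 ^ (n + 1) * (((0.71 * real n + 0.42) + 1.9\<^sup>2) / 1.9)"
      using step.hyps by (simp add: b_def chaining_log_bound_def chaining_scale_def)
    have "b (Suc n) + 0.7072 ^ (Suc n + 1) * (1.28 * real (Suc n + 1) + 9.1)
        = 0.7072 ^ (n + 1) * (((0.71 * real n + 0.42) + 1.9\<^sup>2) / 1.9 + 0.7072 * (1.28 * real (n + 2) + 9.1))"
      unfolding b_Suc by (simp add: algebra_simps)
    moreover have "(\<Sum>k\<le>Suc n. b k) = (\<Sum>k\<le>n. b k) + b (Suc n)"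
      by simp
    ultimately show ?case
      using decrease step.IH by linarith
  qed
  have "(\<Sum>k\<le>n. b k) \<le> (\<Sum>k\<le>max n 2. b k)"
    by (rule sum_mono2) (auto simp: b_nonneg)
  also have "\<dots> \<le> 8.6"
  proof -
    have "0 \<le> 0.7072 ^ (max n 2 + 1) * (1.28 * real (max n 2 + 1) + (9.1 :: real))"
      by simp
    then show ?thesis
      using tail[of "max n 2"] by linarith
  qed
  finally show ?thesis
    by (simp add: b_def)
qed

lemma chaining_series_le:
  "(\<Sum>k\<le>n. (ln (real (odd_dyadic_count k) + 1) + (chaining_scale k)\<^sup>2) / (chaining_scale k * sqrt (2 ^ k)))
    \<le> 8.6"
proof -
  have "(ln (real (odd_dyadic_count k) + 1) + (chaining_scale k)\<^sup>2) / (chaining_scale k * sqrt (2 ^ k))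
      \<le> (chaining_log_bound k + (chaining_scale k)\<^sup>2) / chaining_scale k * 0.7072 ^ k" for k
  proof -
    have \<mu>: "chaining_scale k > 0" and L: "0 \<le> chaining_log_bound k"
      by (auto simp: chaining_scale_def chaining_log_bound_def)
    have "(ln (real (odd_dyadic_count k) + 1) + (chaining_scale k)\<^sup>2) / chaining_scale k * (1 / sqrt (2 ^ k))
        \<le> (chaining_log_bound k + (chaining_scale k)\<^sup>2) / chaining_scale k * 0.7072 ^ k"
      using \<mu> L by (intro mult_mono divide_right_mono add_right_mono ln_odd_dyadic_count_le
        inverse_sqrt_power_2_le) auto
    then show ?thesis
      by simp
  qed
  then have "(\<Sum>k\<le>n. (ln (real (odd_dyadic_count k) + 1) + (chaining_scale k)\<^sup>2) / (chaining_scale k * sqrt (2 ^ k)))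
      \<le> (\<Sum>k\<le>n. (chaining_log_bound k + (chaining_scale k)\<^sup>2) / chaining_scale k * 0.7072 ^ k)"
    by (rule sum_mono)
  also have "\<dots> \<le> 8.6"
    by (rule chaining_bound_sum_le)
  finally show ?thesis .
qed

lemma integral_dyadic_max_exp_covariance_le:
  assumes \<beta>: "\<beta> > 0" and \<sigma>: "\<sigma> > 0"
    and G: "centered_gaussian_process M X {0..1} (\<lambda>x y. \<sigma>\<^sup>2 * exp (- \<beta> * \<bar>x - y\<bar>))"
  shows "(\<integral>\<omega>. dyadic_max (\<lambda>x. X x \<omega>) n \<partial>M) \<le> 8.6 * sqrt \<beta> * \<sigma>"
proof -
  have "(\<integral>\<omega>. dyadic_max (\<lambda>x. X x \<omega>) n \<partial>M) \<le> (\<Sum>k\<le>n. \<integral>\<omega>. dyadic_increment_max (\<lambda>x. X x \<omega>) k \<partial>M)"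
    using integral_dyadic_max_le[where X = X and M = M and n = n, OF integrable_exp_covariance_process[OF \<sigma> G]]
      integral_exp_covariance_process[OF \<sigma> G, of 0] by simp
  also have "\<dots> \<le> (\<Sum>k\<le>n. \<sigma> * sqrt \<beta> *
      ((ln (real (odd_dyadic_count k) + 1) + (chaining_scale k)\<^sup>2) / (chaining_scale k * sqrt (2 ^ k))))"
    by (intro sum_mono integral_dyadic_increment_max_le \<beta> \<sigma> G) (simp add: chaining_scale_def)
  also have "\<dots> = \<sigma> * sqrt \<beta> *
      (\<Sum>k\<le>n. (ln (real (odd_dyadic_count k) + 1) + (chaining_scale k)\<^sup>2) / (chaining_scale k * sqrt (2 ^ k)))"
    by (rule sum_distrib_left[symmetric])
  also have "\<dots> \<le> \<sigma> * sqrt \<beta> * 8.6"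
    using chaining_series_le[of n] \<beta> \<sigma> by (intro mult_left_mono) auto
  finally show ?thesis
    by (simp add: mult_ac)
qed

theorem mainTheorem4:
  fixes M :: "'a measure" and X :: "real \<Rightarrow> 'a \<Rightarrow> real" and \<beta> \<sigma> :: real
  assumes "\<beta> > 0" and "\<sigma> > 0"
    and "centered_gaussian_process M X {0..1} (\<lambda>x y. \<sigma>\<^sup>2 * exp (- \<beta> * \<bar>x - y\<bar>))"
    and "\<forall>\<omega>\<in>space M. continuous_on {0..1} (\<lambda>x. X x \<omega>)"
  shows "(\<forall>n::nat.
            integrable M (\<lambda>\<omega>. Max ((\<lambda>i. X (real i / 2 ^ n) \<omega>) ` {0..2 ^ n})) \<and>
            (\<integral>\<omega>. Max ((\<lambda>i. X (real i / 2 ^ n) \<omega>) ` {0..2 ^ n}) \<partial>M) < 8.68 * sqrt \<beta> * \<sigma>)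
       \<and> integrable M (\<lambda>\<omega>. Sup ((\<lambda>x. X x \<omega>) ` {0..1}))
       \<and> (\<integral>\<omega>. Sup ((\<lambda>x. X x \<omega>) ` {0..1}) \<partial>M) \<le> 8.68 * sqrt \<beta> * \<sigma>"
proof -
  note max_int = integrable_dyadic_max[where X = X and M = M,
      OF integrable_exp_covariance_process[OF assms(2,3)]]
  note bound = integral_dyadic_max_exp_covariance_le[OF assms(1-3)]
  have lim: "(\<lambda>n. dyadic_max (\<lambda>x. X x \<omega>) n) \<longlonglongrightarrow> Sup ((\<lambda>x. X x \<omega>) ` {0..1})" if "\<omega> \<in> space M" for \<omega>
    using assms(4) that by (intro tendsto_dyadic_max) auto
  note sup = integral_le_of_tendsto_mono[where f = "\<lambda>n \<omega>. dyadic_max (\<lambda>x. X x \<omega>) n",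
      OF max_int dyadic_max_le_Suc lim bound]
  have "8.6 * sqrt \<beta> * \<sigma> < 8.68 * sqrt \<beta> * \<sigma>"
    using assms(1,2) by simp
  with max_int bound sup show ?thesis
    unfolding dyadic_max_def by (smt (verit))
qed

end
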